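(* Let $V$ be a real vector space of dimension $n$ and $1\le k\le n-1$. Every lagrangian subspace $L\subseteq V\oplus\wedge^kV^*$ satisfies condition (C2w) ($L\subseteq L^\perp$ and $L\cap V=\mathrm{pr}_2(L)^\circ$) and condition (C3s) ($L\subseteq L^\perp$ and $\mathrm{Ann}(\mathrm{pr}_1(L))=L\cap\wedge^kV^*$).
   Context: On $V\oplus\wedge^kV^*$ the pairing is $\langle X+\alpha,Y+\beta\rangle=i_X\beta+i_Y\alpha\in\wedge^{k-1}V^*$; $L^\perp$ is the orthogonal, and $L$ is lagrangian if $L=L^\perp$. $\mathrm{pr}_1,\mathrm{pr}_2$ are the projections onto $V$ and $\wedge^kV^*$. For $S\subseteq\wedge^kV^*$, $S^\circ=\{X\in V\mid i_X\eta=0\ \forall\eta\in S\}$; for $E\subseteq V$, $\mathrm{Ann}(E)=\{\alpha\in\wedge^kV^*\mid i_Y\alpha=0\ \forall Y\in E\}$. *)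

theory Defs
  imports "HOL-Analysis.Analysis"
begin

text \<open>An element of \<wedge>^k V^* is modelled
  as a real-valued alternating k-multilinear map on V; its arguments are given as a
  sequence vs :: nat \<Rightarrow> 'a, of which only the entries vs 0, ..., vs (k-1) matter.\<close>

type_synonym 'a form = "(nat \<Rightarrow> 'a) \<Rightarrow> real"

definition kform :: "nat \<Rightarrow> ('a::real_vector) form \<Rightarrow> bool" where
  "kform k f \<longleftrightarrow>
     (\<forall>vs ws. (\<forall>i<k. vs i = ws i) \<longrightarrow> f vs = f ws) \<and>
     (\<forall>i<k. \<forall>vs. linear (\<lambda>x. f (vs(i := x)))) \<and>
     (\<forall>vs i j. i < k \<longrightarrow> j < k \<longrightarrow> i \<noteq> j \<longrightarrow> vs i = vs j \<longrightarrow> f vs = 0)"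

definition interior :: "'a \<Rightarrow> 'a form \<Rightarrow> 'a form" where
  "interior X f = (\<lambda>vs. f (\<lambda>i. if i = 0 then X else vs (i - 1)))"

definition zero_form :: "'a form" where
  "zero_form = (\<lambda>_. 0)"

definition pairing :: "'a \<times> 'a form \<Rightarrow> 'a \<times> 'a form \<Rightarrow> 'a form" where
  "pairing p q = (\<lambda>vs. interior (fst p) (snd q) vs + interior (fst q) (snd p) vs)"

definition gsubspace :: "nat \<Rightarrow> ('a::real_vector \<times> 'a form) set \<Rightarrow> bool" where
  "gsubspace k L \<longleftrightarrow>
     (\<forall>p\<in>L. kform k (snd p)) \<and>
     (0, zero_form) \<in> L \<and>
     (\<forall>p\<in>L. \<forall>q\<in>L. (fst p + fst q, \<lambda>vs. snd p vs + snd q vs) \<in> L) \<and>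
     (\<forall>c. \<forall>p\<in>L. (c *\<^sub>R fst p, \<lambda>vs. c * snd p vs) \<in> L)"

definition orth :: "nat \<Rightarrow> ('a::real_vector \<times> 'a form) set \<Rightarrow> ('a \<times> 'a form) set" where
  "orth k L = {q. kform k (snd q) \<and> (\<forall>p\<in>L. pairing p q = zero_form)}"

definition lagrangian :: "nat \<Rightarrow> ('a::real_vector \<times> 'a form) set \<Rightarrow> bool" where
  "lagrangian k L \<longleftrightarrow> gsubspace k L \<and> L = orth k L"

definition annV :: "'a form set \<Rightarrow> 'a set" where
  "annV S = {X. \<forall>\<eta>\<in>S. interior X \<eta> = zero_form}"

definition Ann :: "nat \<Rightarrow> ('a::real_vector) set \<Rightarrow> 'a form set" where
  "Ann k E = {\<alpha>. kform k \<alpha> \<and> (\<forall>Y\<in>E. interior Y \<alpha> = zero_form)}"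

definition capV :: "('a::zero \<times> 'a form) set \<Rightarrow> 'a set" where
  "capV L = {X. (X, zero_form) \<in> L}"

definition capF :: "('a::zero \<times> 'a form) set \<Rightarrow> 'a form set" where
  "capF L = {\<alpha>. (0, \<alpha>) \<in> L}"

definition C2w :: "nat \<Rightarrow> ('a::real_vector \<times> 'a form) set \<Rightarrow> bool" where
  "C2w k L \<longleftrightarrow> L \<subseteq> orth k L \<and> capV L = annV (snd ` L)"

definition C3s :: "nat \<Rightarrow> ('a::real_vector \<times> 'a form) set \<Rightarrow> bool" where
  "C3s k L \<longleftrightarrow> L \<subseteq> orth k L \<and> Ann k (fst ` L) = capF L"

end

theory Submission
  imports Defs
begin

(* For every L, the orthogonal L^perp satisfies L^perp \<inter> V = pr2(L)\<degree> and
   L^perp \<inter> \<wedge>^k V^* = Ann(pr1(L)): pairing with (X, 0) is just i_X on the form part, and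
   pairing with (0, \<alpha>) is just i_Y \<alpha> on the vector part, because i_0 vanishes on k-forms
   with k \<ge> 1.  For a lagrangian L = L^perp both conditions follow at once. *)

lemma interior_zero_left:
  assumes "kform k f" and "1 \<le> k"
  shows "interior 0 f = zero_form"
proof
  fix vs :: "nat \<Rightarrow> 'a"
  define ws where "ws = (\<lambda>i. if i = 0 then (0::'a) else vs (i - 1))"
  have "linear (\<lambda>x. f (ws(0 := x)))"
    using assms unfolding kform_def by auto
  then have "f (ws(0 := 0)) = 0"
    by (rule linear_0)
  moreover have "ws(0 := 0) = ws"
    unfolding ws_def by auto
  ultimately show "interior 0 f vs = zero_form vs"
    unfolding interior_def zero_form_def ws_def by simp
qed

lemma interior_zero_right: "interior X zero_form = zero_form"
  unfolding interior_def zero_form_def by simp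

lemma kform_zero_form: "kform k (zero_form :: 'a::real_vector form)"
  unfolding kform_def zero_form_def by (auto intro: linearI)

lemma pairing_vector_right: "pairing p (X, zero_form) = interior X (snd p)"
  using interior_zero_right[of "fst p"]
  by (simp add: pairing_def fun_eq_iff zero_form_def)

lemma pairing_form_right:
  assumes "kform k (snd p)" and "1 \<le> k"
  shows "pairing p (0, \<alpha>) = interior (fst p) \<alpha>"
  using interior_zero_left[OF assms]
  by (simp add: pairing_def fun_eq_iff zero_form_def)

lemma capV_orth: "capV (orth k L) = annV (snd ` L)"
  by (auto simp: capV_def annV_def orth_def pairing_vector_right kform_zero_form)

lemma capF_orth:
  assumes "\<forall>p\<in>L. kform k (snd p)" and "1 \<le> k"
  shows "capF (orth k L) = Ann k (fst ` L)"
proof -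
  have "\<forall>p\<in>L. pairing p (0, \<alpha>) = interior (fst p) \<alpha>" for \<alpha>
    using pairing_form_right assms by blast
  then show ?thesis
    by (simp add: capF_def Ann_def orth_def)
qed

theorem lemmaA1:
  fixes L :: "('a::euclidean_space \<times> 'a form) set" and k n :: nat
  assumes "DIM('a) = n" and "1 \<le> k" and "k \<le> n - 1"
    and "lagrangian k L"
  shows "C2w k L \<and> C3s k L"
proof -
  have forms: "\<forall>p\<in>L. kform k (snd p)" and L_orth: "L = orth k L"
    using assms(4) unfolding lagrangian_def gsubspace_def by auto
  have "capV L = annV (snd ` L)"
    using capV_orth L_orth by metis
  moreover have "Ann k (fst ` L) = capF L"
    using capF_orth[OF forms assms(2)] L_orth by metis
  ultimately show ?thesis
    unfolding C2w_def C3s_def using L_orth by auto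
qed

end
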